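(* Let $C_n(a,b)$ be a connected $2$-regular circulant digraph, let $l\ge1$, $0\le k\le l$ with $la+k(b-a)=\omega n$ for a positive integer $\omega$, and let $Q$ be the set of positive divisors of $\gcd(l,k)$ that are coprime with $\omega$. Then $\varphi$ maps $\bigcup_{q\in Q}\mathbb{L}_2^q(l,k)\times\mathbb{Z}_n$ into $\mathcal{P}_{l,k}(C_n(a,b))$, and this map is surjective.
   Context: Let $n\ge 2$ and $0<a<b<n$ be integers with $\gcd(n,a,b)=1$. $C_n(a,b)$ has vertex set $\mathbb{Z}_n$ and directed bonds $(v,v+a)$, $(v,v+b)$ (addition mod $n$), with step sizes $a$, $b$. A path of length $l$ is a sequence of bonds $(e_1,\dots,e_l)$ with the terminus of $e_j$ equal to the origin of $e_{j+1}$; its $b$-count is the number of bonds of step size $b$; its step sequence is the sequence of step sizes; a circuit is a path whose last terminus equals its first origin. A periodic orbit is an equivalence class of circuits under cyclic rotation; it is primitive if it is not $[c_0^r]$ for a circuit $c_0$ and $r>1$ ($c_0^r$ = concatenation of $r$ copies). $\mathcal{P}_{l,k}(C_n(a,b))$ is the set of primitive periodic orbits of length $l$ and $b$-count $k$. Words over $\{a,b\}$ are ordered lexicographically with $a\prec b$; a word is Lyndon if strictly smaller than all its nontrivial cyclic rotations; $\mathbb{L}_2(l,k)$ is the set of Lyndon words of length $l$ with exactly $k$ letters $b$, and for $q\mid\gcd(l,k)$, $\mathbb{L}_2^q(l,k)=\{x^q: x\in\mathbb{L}_2(l/q,k/q)\}$. Identifying letters $a,b$ with step sizes $a,b$, $\psi(w,v)$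 is the unique path starting at vertex $v$ with step sequence $w$; when it is a circuit, $\varphi(w,v)=[\psi(w,v)]$. *)

theory Defs
  imports Main
begin

text \<open>Circulant digraph C_n(a,b): vertices 0..<n (representing Z_n); a bond is a
pair (origin, terminus).  Words over {a,b} are bool lists: False = letter a,
True = letter b, so the order a < b is False < True.\<close>

definition bonds :: "nat \<Rightarrow> nat \<Rightarrow> nat \<Rightarrow> (nat \<times> nat) set" where
  "bonds n a b = {(u, (u + a) mod n) | u. u < n} \<union> {(u, (u + b) mod n) | u. u < n}"

definition is_path :: "nat \<Rightarrow> nat \<Rightarrow> nat \<Rightarrow> (nat \<times> nat) list \<Rightarrow> bool" where
  "is_path n a b p \<longleftrightarrow> set p \<subseteq> bonds n a b \<and>
     (\<forall>j. Suc j < length p \<longrightarrow> snd (p ! j) = fst (p ! Suc j))"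

definition is_circuit :: "nat \<Rightarrow> nat \<Rightarrow> nat \<Rightarrow> (nat \<times> nat) list \<Rightarrow> bool" where
  "is_circuit n a b c \<longleftrightarrow> is_path n a b c \<and> c \<noteq> [] \<and> snd (last c) = fst (hd c)"

definition bcount :: "nat \<Rightarrow> nat \<Rightarrow> (nat \<times> nat) list \<Rightarrow> nat" where
  "bcount n b p = length (filter (\<lambda>e. snd e = (fst e + b) mod n) p)"

definition orbit :: "'e list \<Rightarrow> 'e list set" where
  "orbit c = {rotate i c | i. True}"

definition primitive_orbit :: "nat \<Rightarrow> nat \<Rightarrow> nat \<Rightarrow> (nat \<times> nat) list set \<Rightarrow> bool" where
  "primitive_orbit n a b Orb \<longleftrightarrow>
     \<not> (\<exists>c0 r. r > 1 \<and> is_circuit n a b c0 \<and> Orb = orbit (concat (replicate r c0)))"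

definition P_orbits :: "nat \<Rightarrow> nat \<Rightarrow> nat \<Rightarrow> nat \<Rightarrow> nat \<Rightarrow> (nat \<times> nat) list set set" where
  "P_orbits n a b l k = {Orb. \<exists>c. is_circuit n a b c \<and> Orb = orbit c \<and> length c = l \<and>
       bcount n b c = k \<and> primitive_orbit n a b Orb}"

definition lyndon :: "bool list \<Rightarrow> bool" where
  "lyndon w \<longleftrightarrow> (\<forall>i. 0 < i \<and> i < length w \<longrightarrow> lexordp (<) w (rotate i w))"

definition L2 :: "nat \<Rightarrow> nat \<Rightarrow> bool list set" where
  "L2 l k = {w. length w = l \<and> count_list w True = k \<and> lyndon w}"

definition L2q :: "nat \<Rightarrow> nat \<Rightarrow> nat \<Rightarrow> bool list set" where
  "L2q q l k = {concat (replicate q x) | x. x \<in> L2 (l div q) (k div q)}"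

fun psi :: "nat \<Rightarrow> nat \<Rightarrow> nat \<Rightarrow> bool list \<Rightarrow> nat \<Rightarrow> (nat \<times> nat) list" where
  "psi n a b [] v = []"
| "psi n a b (x # w) v =
     (let v' = (v + (if x then b else a)) mod n in (v, v') # psi n a b w v')"

definition varphi :: "nat \<Rightarrow> nat \<Rightarrow> nat \<Rightarrow> bool list \<Rightarrow> nat \<Rightarrow> (nat \<times> nat) list set" where
  "varphi n a b w v = orbit (psi n a b w v)"

end

theory Submission
  imports Defs "HOL-Library.List_Lexorder"
begin

(*
  Paths of C_n(a,b) from v correspond to words via psi, rotating a circuit rotates its word,
  and psi w v closes up exactly when n divides the total step length of w.  Every nonempty word
  is a rotation of a power x^p of a Lyndon word x, so every periodic orbit is varphi (x^p) v.
  Suppose p times the step length of x is \<omega> n.  If g = gcd p \<omega> > 1, then x^(p/g) already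
  closes up and the orbit is the g-th power of a shorter circuit.  Conversely, if the orbit is a
  proper power [c0^r], some rotation of x^p equals z^r, where z is the word of c0: then r divides p
  because the Lyndon word x has no nontrivial rotational symmetry, and r divides \<omega> because z
  closes up.  So the orbit is primitive iff p and \<omega> are coprime.
*)

definition list_pow :: "'a list \<Rightarrow> nat \<Rightarrow> 'a list" where
  "list_pow x q = concat (replicate q x)"

lemma length_list_pow [simp]: "length (list_pow x q) = q * length x"
  unfolding list_pow_def by (induct q) auto

lemma count_list_list_pow [simp]: "count_list (list_pow x q) t = q * count_list x t"
  unfolding list_pow_def by (induct q) auto

lemma list_pow_eq_Nil_iff [simp]: "list_pow x q = [] \<longleftrightarrow> q = 0 \<or> x = []"
  unfolding list_pow_def by (induct q) auto

lemma map_list_pow: "map f (list_pow x q) = list_pow (map f x) q"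
  unfolding list_pow_def by (simp add: map_concat)

lemma list_pow_mult: "list_pow x (e * g) = list_pow (list_pow x e) g"
  by (induct g) (simp_all add: list_pow_def replicate_add)

lemma nth_list_pow: "i < q * length x \<Longrightarrow> list_pow x q ! i = x ! (i mod length x)"
proof (induct q arbitrary: i)
  case (Suc q)
  have "list_pow x (Suc q) = x @ list_pow x q"
    by (simp add: list_pow_def)
  with Suc show ?case
    by (cases "i < length x") (auto simp: nth_append mod_if)
qed simp

lemma rotate_list_pow: "rotate j (list_pow y p) = list_pow (rotate j y) p"
proof (rule nth_equalityI)
  fix i assume "i < length (rotate j (list_pow y p))"
  then have i: "i < p * length y" by simp
  have "0 < p" by (rule gr0I) (use i in simp)
  have "y \<noteq> []" using i by auto
  with \<open>0 < p\<close> show "rotate j (list_pow y p) ! i = list_pow (rotate j y) p ! i"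
    using i by (simp add: nth_rotate nth_list_pow mod_mod_cancel mod_add_right_eq)
qed simp

lemma count_list_rotate [simp]: "count_list (rotate i xs) t = count_list xs t"
proof -
  have "count_list (rotate1 xs) t = count_list xs t" for xs by (cases xs) auto
  then show ?thesis by (induct i) auto
qed

lemma inj_rotate: "inj (rotate i)"
proof (induct i)
  case (Suc i)
  have "rotate (Suc i) = rotate1 \<circ> rotate i" by (rule ext) simp
  with Suc show ?case by (metis inj_compose inj_rotate1)
qed simp

lemma rotate_commute: "rotate i (rotate j xs) = rotate j (rotate i xs)"
  by (simp add: rotate_rotate add.commute)

lemma rotate_mult_eq_self: "rotate d xs = xs \<Longrightarrow> rotate (m * d) xs = xs"
proof (induct m)
  case (Suc m)
  have "rotate (Suc m * d) xs = rotate d (rotate (m * d) xs)"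
    by (simp add: rotate_rotate add.commute)
  with Suc show ?case by simp
qed simp

lemma rotate_eq_self_imp_list_pow:
  assumes "rotate d s = s" "0 < d" "d dvd length s"
  shows "s = list_pow (take d s) (length s div d)"
proof -
  have periodic: "s ! i = s ! (i mod d)" if "i < length s" for i
    using that
  proof (induct i rule: less_induct)
    case (less i)
    show ?case
    proof (cases "i < d")
      case False
      have "s ! i = rotate d s ! (i - d)"
        using False less.prems by (simp add: nth_rotate)
      also have "\<dots> = s ! ((i - d) mod d)"
        using assms(1) less False \<open>0 < d\<close> by simp
      finally show ?thesis using False by (simp add: mod_if)
    qed simp
  qed
  have d_le: "d \<le> length s" if "s \<noteq> []"
    using assms(3) that by (simp add: dvd_imp_le)
  show ?thesis
  proof (rule nth_equalityI)
    fix i assume i: "i < length s"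
    then have "s \<noteq> []" by auto
    with d_le have "min (length s) d = d" by simp
    then have "list_pow (take d s) (length s div d) ! i = take d s ! (i mod d)"
      using nth_list_pow[of i "length s div d" "take d s"] i assms(3) by simp
    then show "s ! i = list_pow (take d s) (length s div d) ! i"
      using periodic i \<open>0 < d\<close> by simp
  qed (use assms(3) d_le in \<open>cases "s = []"; simp add: min_def\<close>)
qed

lemma list_pow_inject:
  assumes "0 < q" "length u = length v" "list_pow u q = list_pow v q"
  shows "u = v"
proof -
  obtain q' where "q = Suc q'" using assms(1) gr0_implies_Suc by blast
  then have "u @ list_pow u q' = v @ list_pow v q'"
    using assms(3) by (simp add: list_pow_def)
  then show ?thesis using assms(2) by simp
qed

lemma ex_primitive_root:
  assumes "s \<noteq> []"
  shows "\<exists>y p. 0 < p \<and> s = list_pow y p \<and> (\<forall>i. 0 < i \<and> i < length y \<longrightarrow> rotate i y \<noteq> y)"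
proof -
  define P where "P d \<longleftrightarrow> 0 < d \<and> rotate d s = s" for d
  define d where "d = (LEAST d. P d)"
  have "P (length s)" using assms by (simp add: P_def)
  then have "P d" unfolding d_def by (rule LeastI)
  have d_min: "rotate i s \<noteq> s" if "0 < i" "i < d" for i
    using not_less_Least[of i P] that unfolding d_def P_def by blast
  from \<open>P d\<close> have "0 < d" and d_fix: "rotate d s = s" by (auto simp: P_def)
  have "rotate (length s mod d) s = rotate (length s mod d) (rotate (length s div d * d) s)"
    using rotate_mult_eq_self[OF d_fix] by simp
  also have "\<dots> = s" by (simp add: rotate_rotate)
  finally have "length s mod d = 0"
    using d_min \<open>0 < d\<close> by (meson mod_less_divisor not_gr0)
  then have dvd: "d dvd length s" by (simp add: dvd_eq_mod_eq_0)
  define y where "y = take d s"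
  define p where "p = length s div d"
  have s_eq: "s = list_pow y p"
    unfolding y_def p_def using rotate_eq_self_imp_list_pow[OF d_fix \<open>0 < d\<close> dvd] .
  then have "0 < p" using assms by (cases p) auto
  have "length y = d" using dvd assms unfolding y_def by (simp add: dvd_imp_le min_absorb2)
  have "rotate i y \<noteq> y" if "0 < i" "i < length y" for i
  proof
    assume "rotate i y = y"
    then have "rotate i s = s" using s_eq by (simp add: rotate_list_pow)
    then show False using d_min that \<open>length y = d\<close> by blast
  qed
  with s_eq \<open>0 < p\<close> show ?thesis by blast
qed

lemma lexordp_less_iff: "List.lexordp (<) xs ys \<longleftrightarrow> xs < ys"
  by (simp add: List.lexordp_def list_less_def)

lemma lyndon_iff_less_rotations: "lyndon w \<longleftrightarrow> (\<forall>i. 0 < i \<and> i < length w \<longrightarrow> w < rotate i w)"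
  by (simp add: lyndon_def lexordp_less_iff)

lemma lyndon_rotate_neq:
  assumes "lyndon x" "0 < i" "i < length x"
  shows "rotate i x \<noteq> x"
proof
  assume "rotate i x = x"
  moreover have "x < rotate i x"
    using assms by (simp add: lyndon_iff_less_rotations)
  ultimately show False by simp
qed

lemma lyndon_length_dvd_rotation:
  assumes "lyndon x" "x \<noteq> []" "0 < q" "rotate d (list_pow x q) = list_pow x q"
  shows "length x dvd d"
proof -
  have "list_pow (rotate d x) q = list_pow x q"
    using assms(4) by (simp add: rotate_list_pow)
  then have "rotate d x = x"
    using list_pow_inject[OF assms(3), of "rotate d x" x] by simp
  then have "rotate (d mod length x) x = x"
    using rotate_conv_mod[of d x] by simp
  moreover have "d mod length x < length x" using assms(2) by simp
  ultimately have "d mod length x = 0"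
    using lyndon_rotate_neq[OF assms(1)] by (metis neq0_conv)
  then show ?thesis by (simp add: dvd_eq_mod_eq_0)
qed

(* The least rotation of a primitive word is a Lyndon word. *)
lemma ex_lyndon_rotation:
  fixes y :: "bool list"
  assumes "y \<noteq> []" and primitive: "\<forall>i. 0 < i \<and> i < length y \<longrightarrow> rotate i y \<noteq> y"
  shows "\<exists>j. lyndon (rotate j y)"
proof -
  define R where "R = (\<lambda>j. rotate j y) ` {..<length y}"
  have "finite R" "R \<noteq> {}" using assms(1) by (auto simp: R_def)
  then obtain j where m: "Min R = rotate j y" using Min_in unfolding R_def by blast
  have "rotate j y < rotate i (rotate j y)" if "0 < i" "i < length y" for i
  proof -
    have "rotate i (rotate j y) = rotate ((i + j) mod length y) y"
      by (simp add: rotate_rotate flip: rotate_conv_mod)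
    then have "rotate j y \<le> rotate i (rotate j y)"
      using \<open>finite R\<close> m assms(1) unfolding R_def
      by (metis Min_le image_eqI lessThan_iff length_greater_0_conv mod_less_divisor)
    moreover have "rotate i (rotate j y) \<noteq> rotate j y"
      using primitive that injD[OF inj_rotate, of j] by (metis rotate_commute)
    ultimately show ?thesis by simp
  qed
  then show ?thesis by (auto simp: lyndon_iff_less_rotations)
qed

lemma ex_rotate_eq_lyndon_pow:
  fixes s :: "bool list"
  assumes "s \<noteq> []"
  shows "\<exists>j x p. 0 < p \<and> x \<noteq> [] \<and> lyndon x \<and> rotate j s = list_pow x p"
proof -
  obtain y p where "0 < p" and s: "s = list_pow y p"
    and primitive: "\<forall>i. 0 < i \<and> i < length y \<longrightarrow> rotate i y \<noteq> y"
    using ex_primitive_root[OF assms] by blast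
  then have "y \<noteq> []" using assms by auto
  then obtain j where "lyndon (rotate j y)" using ex_lyndon_rotation primitive by blast
  then show ?thesis
    using \<open>0 < p\<close> \<open>y \<noteq> []\<close> s
    by (intro exI[of _ j] exI[of _ "rotate j y"] exI[of _ p]) (simp add: rotate_list_pow)
qed

(* For a \<le> b the sum of the step sizes along w, i.e. the paper's l a + k (b - a). *)
definition displacement :: "nat \<Rightarrow> nat \<Rightarrow> bool list \<Rightarrow> nat" where
  "displacement a b w = length w * a + count_list w True * (b - a)"

(* Left inverse of psi (step_word_psi): a bond is a b-step iff it adds b, which cannot
   coincide with adding a since 0 < b - a < n. *)
definition step_word :: "nat \<Rightarrow> nat \<Rightarrow> (nat \<times> nat) list \<Rightarrow> bool list" where
  "step_word n b p = map (\<lambda>e. snd e = (fst e + b) mod n) p"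

lemma displacement_Nil [simp]: "displacement a b [] = 0"
  by (simp add: displacement_def)

lemma displacement_Cons:
  assumes "a \<le> b"
  shows "displacement a b (x # w) = (if x then b else a) + displacement a b w"
proof -
  obtain d where "b = a + d" using le_Suc_ex[OF assms] by blast
  then show ?thesis by (simp add: displacement_def algebra_simps)
qed

lemma displacement_list_pow: "displacement a b (list_pow x q) = q * displacement a b x"
  by (simp add: displacement_def algebra_simps)

lemma displacement_rotate [simp]: "displacement a b (rotate i w) = displacement a b w"
  by (simp add: displacement_def)

lemma length_psi [simp]: "length (psi n a b w v) = length w"
  by (induct w arbitrary: v) (simp_all add: Let_def)

lemma psi_eq_Nil_iff [simp]: "psi n a b w v = [] \<longleftrightarrow> w = []"
  by (cases w) (simp_all add: Let_def)

lemma fst_hd_psi: "w \<noteq> [] \<Longrightarrow> fst (hd (psi n a b w v)) = v"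
  by (cases w) (simp_all add: Let_def)

lemma snd_last_psi:
  "a \<le> b \<Longrightarrow> w \<noteq> [] \<Longrightarrow> snd (last (psi n a b w v)) = (v + displacement a b w) mod n"
proof (induct w arbitrary: v)
  case (Cons x w)
  then show ?case
    by (cases "w = []")
      (simp_all add: Let_def displacement_Cons mod_add_left_eq add.assoc)
qed simp

lemma psi_append:
  "a \<le> b \<Longrightarrow> v < n \<Longrightarrow> psi n a b (w @ u) v = psi n a b w v @ psi n a b u ((v + displacement a b w) mod n)"
proof (induct w arbitrary: v)
  case Nil
  then show ?case by simp
next
  case (Cons x w)
  then show ?case
    by (simp add: Let_def displacement_Cons mod_add_left_eq add.assoc)
qed

lemma psi_list_pow:
  assumes "a \<le> b" "v < n" "n dvd displacement a b z"
  shows "psi n a b (list_pow z g) v = list_pow (psi n a b z v) g"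
proof -
  obtain t where "displacement a b z = n * t" using assms(3) ..
  then have "(v + displacement a b z) mod n = v" using assms(2) by simp
  then show ?thesis
    by (induct g) (simp_all add: list_pow_def psi_append[OF assms(1,2)])
qed

lemma add_mod_neq_add_mod: "a < b \<Longrightarrow> b < n \<Longrightarrow> (v + a) mod n \<noteq> (v + b) mod (n::nat)"
proof
  assume "a < b" "b < n" and "(v + a) mod n = (v + b) mod n"
  then have "n dvd b - a" using mod_eq_dvd_iff_nat[of "v + a" "v + b" n] by simp
  with \<open>a < b\<close> \<open>b < n\<close> show False by (auto dest: dvd_imp_le)
qed

lemma step_word_psi: "a < b \<Longrightarrow> b < n \<Longrightarrow> step_word n b (psi n a b w v) = w"
  by (induct w arbitrary: v) (auto simp: step_word_def Let_def add_mod_neq_add_mod)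

lemma bcount_eq_count_list_step_word: "bcount n b p = count_list (step_word n b p) True"
  by (simp add: bcount_def step_word_def count_list_eq_length_filter filter_map comp_def eq_commute)

lemma step_word_rotate: "step_word n b (rotate i p) = rotate i (step_word n b p)"
  by (simp add: step_word_def rotate_map)

lemma step_word_list_pow: "step_word n b (list_pow p r) = list_pow (step_word n b p) r"
  by (simp add: step_word_def map_list_pow)

lemma is_path_Cons:
  "is_path n a b (e # p) \<longleftrightarrow> e \<in> bonds n a b \<and> (p \<noteq> [] \<longrightarrow> snd e = fst (hd p)) \<and> is_path n a b p"
  by (cases p) (auto simp: is_path_def nth_Cons split: nat.splits)

lemma is_path_snoc:
  "is_path n a b (p @ [e]) \<longleftrightarrow> is_path n a b p \<and> e \<in> bonds n a b \<and> (p \<noteq> [] \<longrightarrow> snd (last p) = fst e)"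
  by (induct p) (auto simp: is_path_Cons)

lemma fst_less_if_bond: "e \<in> bonds n a b \<Longrightarrow> fst e < n"
  by (auto simp: bonds_def)

lemma is_path_psi: "v < n \<Longrightarrow> is_path n a b (psi n a b w v)"
proof (induct w arbitrary: v)
  case Nil
  show ?case by (simp add: is_path_def)
next
  case (Cons x w)
  let ?v = "(v + (if x then b else a)) mod n"
  have "(v, ?v) \<in> bonds n a b" using Cons.prems by (auto simp: bonds_def)
  moreover have "is_path n a b (psi n a b w ?v)" using Cons by simp
  ultimately show ?case by (simp add: Let_def is_path_Cons fst_hd_psi)
qed

lemma path_eq_psi:
  assumes "a < b" "b < n" "is_path n a b p" "p \<noteq> []"
  shows "p = psi n a b (step_word n b p) (fst (hd p))"
  using assms(3,4)
proof (induct p)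
  case (Cons e p)
  have "e \<in> bonds n a b" using Cons.prems by (simp add: is_path_Cons)
  then have "snd e = (fst e + (if snd e = (fst e + b) mod n then b else a)) mod n"
    by (auto simp: bonds_def)
  with Cons show ?case
    by (cases "p = []") (auto simp: step_word_def Let_def prod_eq_iff is_path_Cons)
qed simp

lemma bcount_psi: "a < b \<Longrightarrow> b < n \<Longrightarrow> bcount n b (psi n a b w v) = count_list w True"
  by (simp add: bcount_eq_count_list_step_word step_word_psi)

lemma bcount_rotate [simp]: "bcount n b (rotate i p) = bcount n b p"
  by (simp add: bcount_eq_count_list_step_word step_word_rotate)

lemma is_circuit_psi_iff:
  assumes "a \<le> b" "v < n" "w \<noteq> []"
  shows "is_circuit n a b (psi n a b w v) \<longleftrightarrow> n dvd displacement a b w"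
proof -
  have "(v + displacement a b w) mod n = v \<longleftrightarrow> n dvd displacement a b w"
    using assms(2) mod_eq_dvd_iff_nat[of v "v + displacement a b w" n] by auto
  then show ?thesis
    using assms by (simp add: is_circuit_def is_path_psi snd_last_psi fst_hd_psi)
qed

lemma circuit_eq_psi:
  assumes "a < b" "b < n" "is_circuit n a b c"
  shows "\<exists>v<n. c = psi n a b (step_word n b c) v"
proof -
  have "is_path n a b c" "c \<noteq> []" using assms(3) by (auto simp: is_circuit_def)
  then have "fst (hd c) < n"
    by (metis fst_less_if_bond hd_in_set is_path_def subsetD)
  then show ?thesis using path_eq_psi[OF assms(1,2)] \<open>is_path n a b c\<close> \<open>c \<noteq> []\<close> by blast
qed

lemma is_circuit_rotate1: "is_circuit n a b c \<Longrightarrow> is_circuit n a b (rotate1 c)"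
proof -
  assume circuit: "is_circuit n a b c"
  then obtain e p where c: "c = e # p" by (cases c) (auto simp: is_circuit_def)
  show ?thesis
  proof (cases "p = []")
    case False
    with circuit show ?thesis
      unfolding c is_circuit_def by (auto simp: is_path_Cons is_path_snoc)
  qed (use circuit c in simp)
qed

lemma is_circuit_rotate: "is_circuit n a b c \<Longrightarrow> is_circuit n a b (rotate i c)"
  by (induct i) (simp_all add: is_circuit_rotate1)

lemma orbit_rotate: "orbit (rotate j c) = orbit c"
proof -
  have undo: "rotate (i + (length c - 1) * j) (rotate j c) = rotate i c" for i
  proof (cases "c = []")
    case False
    then have "i + (length c - 1) * j + j = i + j * length c"
      by (cases "length c") (simp_all add: algebra_simps)
    then have "rotate (i + (length c - 1) * j) (rotate j c) = rotate (i + j * length c) c"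
      by (simp add: rotate_rotate add.assoc)
    also have "\<dots> = rotate i c"
      using rotate_conv_mod[of "i + j * length c" c] rotate_conv_mod[of i c] by simp
    finally show ?thesis .
  qed simp
  have "rotate i c \<in> orbit (rotate j c)" for i
    unfolding orbit_def using undo[of i] by (auto intro!: exI[of _ "i + (length c - 1) * j"])
  then show ?thesis by (auto simp: orbit_def rotate_rotate)
qed

lemma rotate_lyndon_pow_eq_list_pow_dvd:
  assumes "lyndon x" "x \<noteq> []" "0 < q" "rotate i (list_pow x q) = list_pow z r"
  shows "r dvd q"
proof -
  have "rotate i (rotate (length z) (list_pow x q)) = rotate (length z) (rotate i (list_pow x q))"
    by (rule rotate_commute)
  also have "\<dots> = rotate i (list_pow x q)"
    using assms(4) by (simp add: rotate_list_pow)
  finally have "rotate (length z) (list_pow x q) = list_pow x q"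
    by (rule injD[OF inj_rotate])
  then have "length x dvd length z"
    by (rule lyndon_length_dvd_rotation[OF assms(1-3)])
  then obtain e where e: "length z = length x * e" ..
  have "q * length x = r * length z"
    using arg_cong[OF assms(4), of length] by simp
  also have "\<dots> = (r * e) * length x"
    using e by simp
  finally have "q = r * e"
    using mult_right_cancel[of "length x" q "r * e"] assms(2) by simp
  then show ?thesis by simp
qed

lemma not_primitive_orbit_psi_list_pow:
  assumes "a \<le> b" "v < n" "z \<noteq> []" "n dvd displacement a b z" "1 < g"
  shows "\<not> primitive_orbit n a b (orbit (psi n a b (list_pow z g) v))"
proof -
  have "is_circuit n a b (psi n a b z v)"
    using assms by (simp add: is_circuit_psi_iff)
  moreover have "psi n a b (list_pow z g) v = concat (replicate g (psi n a b z v))"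
    using psi_list_pow[OF assms(1,2,4)] by (simp add: list_pow_def)
  ultimately show ?thesis
    unfolding primitive_orbit_def not_not using assms(5)
    by (intro exI[of _ "psi n a b z v"] exI[of _ g]) simp
qed

lemma coprime_if_primitive_orbit_psi_list_pow:
  assumes "a \<le> b" "x \<noteq> []" "0 < q" "v < n"
    and closed: "q * displacement a b x = \<omega> * n"
    and primitive: "primitive_orbit n a b (orbit (psi n a b (list_pow x q) v))"
  shows "coprime q \<omega>"
proof (rule ccontr)
  define g where "g = gcd q \<omega>"
  assume "\<not> coprime q \<omega>"
  then have "1 < g" using \<open>0 < q\<close> unfolding g_def
    by (metis coprime_iff_gcd_eq_1 gcd_pos_nat less_one nat_neq_iff)
  obtain e where q: "q = e * g" unfolding g_def by (metis dvdE gcd_dvd1 mult.commute)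
  obtain t where "\<omega> = g * t" unfolding g_def by (metis dvdE gcd_dvd2)
  with closed q \<open>1 < g\<close> have "e * displacement a b x = t * n"
    by (simp add: algebra_simps)
  then have "n dvd displacement a b (list_pow x e)"
    by (simp add: displacement_list_pow)
  moreover have "list_pow x e \<noteq> []" using q \<open>0 < q\<close> \<open>x \<noteq> []\<close> by simp
  ultimately show False
    using not_primitive_orbit_psi_list_pow[of a b v n "list_pow x e" g] primitive
      assms(1,4) \<open>1 < g\<close> q by (simp add: list_pow_mult)
qed

lemma primitive_orbit_psi_lyndon_pow:
  assumes "a < b" "b < n" "lyndon x" "x \<noteq> []" "0 < q"
    and closed: "q * displacement a b x = \<omega> * n" and "coprime q \<omega>"
  shows "primitive_orbit n a b (orbit (psi n a b (list_pow x q) v))"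
  unfolding primitive_orbit_def
proof clarify
  fix c0 r
  assume "1 < r" "is_circuit n a b c0"
    and orbits: "orbit (psi n a b (list_pow x q) v) = orbit (concat (replicate r c0))"
  define z where "z = step_word n b c0"
  obtain u where "u < n" and c0: "c0 = psi n a b z u"
    using circuit_eq_psi[OF assms(1,2) \<open>is_circuit n a b c0\<close>] unfolding z_def by blast
  have "z \<noteq> []" using \<open>is_circuit n a b c0\<close> c0 by (auto simp: is_circuit_def)
  then obtain t where t: "displacement a b z = n * t"
    using \<open>is_circuit n a b c0\<close> c0 \<open>u < n\<close> assms(1) by (auto simp: is_circuit_psi_iff)
  have "list_pow c0 r \<in> orbit (psi n a b (list_pow x q) v)"
    using orbits by (auto simp: orbit_def list_pow_def intro: exI[of _ 0])
  then obtain i where "list_pow c0 r = rotate i (psi n a b (list_pow x q) v)"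
    by (auto simp: orbit_def)
  then have "step_word n b (list_pow c0 r) = step_word n b (rotate i (psi n a b (list_pow x q) v))"
    by simp
  then have rot: "rotate i (list_pow x q) = list_pow z r"
    using assms(1,2) by (simp add: z_def step_word_list_pow step_word_rotate step_word_psi)
  then have "r dvd q"
    using rotate_lyndon_pow_eq_list_pow_dvd assms(3-5) by simp
  have "\<omega> * n = r * displacement a b z"
    using arg_cong[OF rot, of "displacement a b"] closed by (simp add: displacement_list_pow)
  then have "r dvd \<omega>" using t assms(2) by (simp add: algebra_simps)
  with \<open>r dvd q\<close> \<open>coprime q \<omega>\<close> \<open>1 < r\<close> show False
    using coprime_common_divisor by fastforce
qed

lemma primitive_orbit_psi_lyndon_pow_iff:
  assumes "a < b" "b < n" "lyndon x" "x \<noteq> []" "0 < q" "v < n"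
    and closed: "q * displacement a b x = \<omega> * n"
  shows "primitive_orbit n a b (orbit (psi n a b (list_pow x q) v)) \<longleftrightarrow> coprime q \<omega>"
  using coprime_if_primitive_orbit_psi_list_pow[of a b x q v n \<omega>]
    primitive_orbit_psi_lyndon_pow[of a b n x q \<omega> v] assms by auto

lemma circuit_rotate_eq_psi_lyndon_pow:
  assumes "a < b" "b < n" "is_circuit n a b c"
  shows "\<exists>j x p v. 0 < p \<and> x \<noteq> [] \<and> lyndon x \<and> v < n \<and> rotate j c = psi n a b (list_pow x p) v"
proof -
  have "step_word n b c \<noteq> []" using assms(3) by (simp add: is_circuit_def step_word_def)
  then obtain j x p where "0 < p" "x \<noteq> []" "lyndon x"
    and rot: "rotate j (step_word n b c) = list_pow x p"
    using ex_rotate_eq_lyndon_pow by blast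
  obtain v where "v < n" "rotate j c = psi n a b (step_word n b (rotate j c)) v"
    using circuit_eq_psi[OF assms(1,2) is_circuit_rotate[OF assms(3)]] by blast
  with rot \<open>0 < p\<close> \<open>x \<noteq> []\<close> \<open>lyndon x\<close> show ?thesis
    by (auto simp: step_word_rotate)
qed

lemma varphi_lyndon_pow_in_P_orbits:
  assumes "a < b" "b < n" "lyndon x" "x \<noteq> []" "0 < q" "coprime q \<omega>" "v < n"
    and closed: "q * displacement a b x = \<omega> * n"
  shows "is_circuit n a b (psi n a b (list_pow x q) v)"
    and "varphi n a b (list_pow x q) v \<in> P_orbits n a b (q * length x) (q * count_list x True)"
proof -
  show circuit: "is_circuit n a b (psi n a b (list_pow x q) v)"
    using assms by (simp add: is_circuit_psi_iff displacement_list_pow)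
  have "primitive_orbit n a b (orbit (psi n a b (list_pow x q) v))"
    using primitive_orbit_psi_lyndon_pow_iff[OF assms(1-5,7) closed] assms(6) by simp
  with circuit show "varphi n a b (list_pow x q) v \<in> P_orbits n a b (q * length x) (q * count_list x True)"
    using assms(1,2) by (auto simp: P_orbits_def varphi_def bcount_psi)
qed

lemma P_orbits_eq_varphi_lyndon_pow:
  assumes "a < b" "b < n" "Orb \<in> P_orbits n a b l k" "l * a + k * (b - a) = \<omega> * n"
  shows "\<exists>x p v. lyndon x \<and> 0 < p \<and> coprime p \<omega> \<and> v < n \<and>
           l = p * length x \<and> k = p * count_list x True \<and> Orb = varphi n a b (list_pow x p) v"
proof -
  obtain c where "is_circuit n a b c" "length c = l" "bcount n b c = k"
    and primitive: "primitive_orbit n a b (orbit c)" and Orb: "Orb = orbit c"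
    using assms(3) unfolding P_orbits_def by blast
  obtain j x p v where "0 < p" "x \<noteq> []" "lyndon x" "v < n"
    and c: "rotate j c = psi n a b (list_pow x p) v"
    using circuit_rotate_eq_psi_lyndon_pow[OF assms(1,2) \<open>is_circuit n a b c\<close>] by blast
  have "length (rotate j c) = l" "bcount n b (rotate j c) = k"
    using \<open>length c = l\<close> \<open>bcount n b c = k\<close> by simp_all
  then have l: "l = p * length x" and k: "k = p * count_list x True"
    using c assms(1,2) by (simp_all add: bcount_psi)
  then have closed: "p * displacement a b x = \<omega> * n"
    using assms(4) by (simp add: displacement_def algebra_simps)
  have Orb': "Orb = varphi n a b (list_pow x p) v"
    using Orb orbit_rotate[of j c] c by (simp add: varphi_def)
  then have "coprime p \<omega>"
    using primitive_orbit_psi_lyndon_pow_iff[OF assms(1,2) \<open>lyndon x\<close> \<open>x \<noteq> []\<close> \<open>0 < p\<close> \<open>v < n\<close> closed]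
      primitive Orb by (simp add: varphi_def)
  with Orb' l k \<open>0 < p\<close> \<open>lyndon x\<close> \<open>v < n\<close> show ?thesis by blast
qed

theorem mainTheorem14:
  fixes n a b l k \<omega> :: nat
  assumes "n \<ge> 2" and "0 < a" and "a < b" and "b < n"
    and "gcd n (gcd a b) = 1"
    and "l \<ge> 1" and "k \<le> l"
    and "\<omega> > 0" and "l * a + k * (b - a) = \<omega> * n"
  defines "Q \<equiv> {q. 0 < q \<and> q dvd gcd l k \<and> coprime q \<omega>}"
  shows "(\<forall>q\<in>Q. \<forall>w\<in>L2q q l k. \<forall>v<n.
            is_circuit n a b (psi n a b w v) \<and> varphi n a b w v \<in> P_orbits n a b l k)
       \<and> P_orbits n a b l k \<subseteq> {varphi n a b w v | q w v. q \<in> Q \<and> w \<in> L2q q l k \<and> v < n}"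
proof (intro conjI ballI allI impI subsetI)
  fix q w v assume "q \<in> Q" "w \<in> L2q q l k" "v < n"
  then obtain x where "0 < q" "coprime q \<omega>" "lyndon x" "w = list_pow x q"
    "l = q * length x" "k = q * count_list x True"
    by (auto simp: Q_def L2q_def L2_def list_pow_def)
  moreover from this have "x \<noteq> []" and "q * displacement a b x = \<omega> * n"
    using assms(6,9) by (auto simp: displacement_def algebra_simps)
  ultimately show "is_circuit n a b (psi n a b w v)" "varphi n a b w v \<in> P_orbits n a b l k"
    using varphi_lyndon_pow_in_P_orbits[OF assms(3,4)] \<open>v < n\<close> by blast+
next
  fix Orb assume "Orb \<in> P_orbits n a b l k"
  then obtain x p v where "lyndon x" "0 < p" "coprime p \<omega>" "v < n"
    and "l = p * length x" "k = p * count_list x True" "Orb = varphi n a b (list_pow x p) v"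
    using P_orbits_eq_varphi_lyndon_pow[OF assms(3,4) _ assms(9)] by blast
  then show "Orb \<in> {varphi n a b w v | q w v. q \<in> Q \<and> w \<in> L2q q l k \<and> v < n}"
    unfolding Q_def L2q_def L2_def list_pow_def by fastforce
qed

end
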